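(* Let $K$ be a finite group and let $A\subseteq K$ be such that $L:=L(\{1\}\cup A)$ is a reflection system for $K$. If $x\in L$, then $\{1,x\}\cup xA$ generates the reflection system $xL$ for $K$ and $\{1,x\}\cup Ax$ generates the reflection system $Lx$ for $K$, i.e. $L(\{1,x\}\cup xA)=xL$ and $L(\{1,x\}\cup Ax)=Lx$, and both are reflection systems for $K$ equivalent to (but possibly not equal to) $L$.
   Context: For a group $K$ and $a,b\in K$ put $a\circ b:=ab^{-1}a$. For $X\subseteq K$, $L(X)$ denotes the closure of $X$ under $\circ$, i.e. the smallest subset of $K$ containing $X$ and closed under $\circ$; one says $X$ generates $L(X)$. A reflection system for a finite group $K$ is a subset $L\subseteq K$ such that (1) $L$ generates $K$ as a group, (2) $L$ is closed under $\circ$, and (3) $1\in L$. Two reflection systems $L,L'$ for $K$ are called equivalent if $L'=\phi(xL)$ or $L'=\phi(Lx)$ for some $x\in L$ and some automorphism $\phi$ of $K$. *)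

theory Defs
  imports "HOL-Algebra.Algebra"
begin

definition refl_op :: "('a, 'b) monoid_scheme \<Rightarrow> 'a \<Rightarrow> 'a \<Rightarrow> 'a" where
  "refl_op G a b = a \<otimes>\<^bsub>G\<^esub> inv\<^bsub>G\<^esub> b \<otimes>\<^bsub>G\<^esub> a"

definition refl_closure :: "('a, 'b) monoid_scheme \<Rightarrow> 'a set \<Rightarrow> 'a set" where
  "refl_closure G Y = Inter {S. Y \<subseteq> S \<and> (\<forall>a\<in>S. \<forall>b\<in>S. refl_op G a b \<in> S)}"

definition reflection_system :: "('a, 'b) monoid_scheme \<Rightarrow> 'a set \<Rightarrow> bool" where
  "reflection_system G L \<longleftrightarrow>
     L \<subseteq> carrier G \<and>
     generate G L = carrier G \<and>
     (\<forall>a\<in>L. \<forall>b\<in>L. refl_op G a b \<in> L) \<and>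
     \<one>\<^bsub>G\<^esub> \<in> L"

definition equiv_reflection_systems :: "('a, 'b) monoid_scheme \<Rightarrow> 'a set \<Rightarrow> 'a set \<Rightarrow> bool" where
  "equiv_reflection_systems G L L' \<longleftrightarrow>
     (\<exists>x\<in>L. \<exists>\<phi>. \<phi> \<in> iso G G \<and>
        (L' = \<phi> ` (x <#\<^bsub>G\<^esub> L) \<or> L' = \<phi> ` (L #>\<^bsub>G\<^esub> x)))"

end

theory Submission
  imports Defs
begin

text \<open>Left and right multiplication by a fixed element commute with the operation
  \<open>a \<circ> b = a b\<inverse> a\<close>, so they map the closure \<open>L(Y)\<close> onto \<open>L(xY)\<close>, resp. \<open>L(Yx)\<close>.
  For \<open>x \<in> L\<close> we have \<open>x\<inverse> = 1 \<circ> x \<in> L\<close>, hence \<open>1 = x x\<inverse> \<in> xL\<close>, and adjoining \<open>1\<close> to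
  \<open>x({1} \<union> A) = {x} \<union> xA\<close> does not change its closure \<open>xL\<close>. The subgroup generated by \<open>xL\<close>
  contains \<open>x = x1\<close>, hence \<open>x\<inverse>(xL) = L\<close>, hence all of \<open>K\<close>. The identity automorphism
  witnesses the equivalence.\<close>

abbreviation refl_closed :: "('a, 'b) monoid_scheme \<Rightarrow> 'a set \<Rightarrow> bool" where
  "refl_closed G S \<equiv> \<forall>a\<in>S. \<forall>b\<in>S. refl_op G a b \<in> S"

lemma refl_closure_minimal:
  "Y \<subseteq> S \<Longrightarrow> refl_closed G S \<Longrightarrow> refl_closure G Y \<subseteq> S"
  unfolding refl_closure_def by blast

lemma refl_closure_incl: "Y \<subseteq> refl_closure G Y"
  unfolding refl_closure_def by blast

lemma refl_closure_refl_closed: "refl_closed G (refl_closure G Y)"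
  unfolding refl_closure_def by blast

lemma refl_closure_induct [consumes 1, case_names incl refl_op]:
  assumes "z \<in> refl_closure G Y"
    and incl: "\<And>y. y \<in> Y \<Longrightarrow> P y"
    and refl_op: "\<And>a b. a \<in> refl_closure G Y \<Longrightarrow> b \<in> refl_closure G Y \<Longrightarrow> P a \<Longrightarrow> P b
           \<Longrightarrow> P (refl_op G a b)"
  shows "P z"
proof -
  let ?S = "{z \<in> refl_closure G Y. P z}"
  have "Y \<subseteq> ?S"
    using incl refl_closure_incl[of Y G] by blast
  moreover have "refl_closed G ?S"
  proof (intro ballI)
    fix a b assume "a \<in> ?S" "b \<in> ?S"
    then have "a \<in> refl_closure G Y" "b \<in> refl_closure G Y" "P a" "P b"
      by simp_all
    then show "refl_op G a b \<in> ?S"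
      using refl_op refl_closure_refl_closed[of G Y] by simp
  qed
  ultimately have "refl_closure G Y \<subseteq> ?S"
    by (rule refl_closure_minimal)
  then show ?thesis
    using assms(1) by blast
qed

lemma refl_closure_insert:
  assumes "a \<in> refl_closure G Y"
  shows "refl_closure G (insert a Y) = refl_closure G Y"
proof
  show "refl_closure G (insert a Y) \<subseteq> refl_closure G Y"
    using assms refl_closure_incl[of Y G] refl_closure_refl_closed[of G Y]
    by (intro refl_closure_minimal) simp_all
  show "refl_closure G Y \<subseteq> refl_closure G (insert a Y)"
    using refl_closure_incl[of "insert a Y" G] refl_closure_refl_closed[of G "insert a Y"]
    by (intro refl_closure_minimal) simp_all
qed

lemma equiv_reflection_systems_l_coset:
  "x \<in> L \<Longrightarrow> equiv_reflection_systems G L (x <#\<^bsub>G\<^esub> L)"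
  unfolding equiv_reflection_systems_def using iso_set_refl[of G] by auto

lemma equiv_reflection_systems_r_coset:
  "x \<in> L \<Longrightarrow> equiv_reflection_systems G L (L #>\<^bsub>G\<^esub> x)"
  unfolding equiv_reflection_systems_def using iso_set_refl[of G] by auto

context group
begin

lemma refl_op_closed [intro, simp]:
  "a \<in> carrier G \<Longrightarrow> b \<in> carrier G \<Longrightarrow> refl_op G a b \<in> carrier G"
  by (simp add: refl_op_def)

lemma refl_op_one_left: "x \<in> carrier G \<Longrightarrow> refl_op G \<one> x = inv x"
  by (simp add: refl_op_def)

lemma mult_refl_op:
  "\<lbrakk>x \<in> carrier G; a \<in> carrier G; b \<in> carrier G\<rbrakk>
    \<Longrightarrow> x \<otimes> refl_op G a b = refl_op G (x \<otimes> a) (x \<otimes> b)"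
  by (simp add: refl_op_def inv_mult_group m_assoc) (simp add: m_assoc [symmetric])

lemma refl_op_mult:
  "\<lbrakk>x \<in> carrier G; a \<in> carrier G; b \<in> carrier G\<rbrakk>
    \<Longrightarrow> refl_op G a b \<otimes> x = refl_op G (a \<otimes> x) (b \<otimes> x)"
  by (simp add: refl_op_def inv_mult_group m_assoc) (simp add: m_assoc [symmetric])

lemma refl_closure_subset_carrier:
  "Y \<subseteq> carrier G \<Longrightarrow> refl_closure G Y \<subseteq> carrier G"
  by (rule refl_closure_minimal) auto

lemma inv_mem_refl_closed:
  assumes "refl_closed G S" "\<one> \<in> S" "x \<in> S" "x \<in> carrier G"
  shows "inv x \<in> S"
  using assms by (metis refl_op_one_left)

lemma refl_closed_image:
  assumes f: "\<And>a b. a \<in> carrier G \<Longrightarrow> b \<in> carrier G \<Longrightarrow> f (refl_op G a b) = refl_op G (f a) (f b)"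
    and "S \<subseteq> carrier G" "refl_closed G S"
  shows "refl_closed G (f ` S)"
proof clarify
  fix a b assume ab: "a \<in> S" "b \<in> S"
  with assms(2) have "a \<in> carrier G" "b \<in> carrier G"
    by blast+
  then have "refl_op G (f a) (f b) = f (refl_op G a b)"
    by (simp add: f)
  moreover have "refl_op G a b \<in> S"
    using ab assms(3) by blast
  ultimately show "refl_op G (f a) (f b) \<in> f ` S"
    by simp
qed

lemma refl_closure_image:
  assumes f: "\<And>a b. a \<in> carrier G \<Longrightarrow> b \<in> carrier G \<Longrightarrow> f (refl_op G a b) = refl_op G (f a) (f b)"
    and "Y \<subseteq> carrier G"
  shows "f ` refl_closure G Y = refl_closure G (f ` Y)"
proof
  have cl: "refl_closure G Y \<subseteq> carrier G"
    using assms(2) by (rule refl_closure_subset_carrier)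
  show "f ` refl_closure G Y \<subseteq> refl_closure G (f ` Y)"
  proof clarify
    fix z assume "z \<in> refl_closure G Y"
    then show "f z \<in> refl_closure G (f ` Y)"
    proof (induction rule: refl_closure_induct)
      case (incl y)
      then show ?case
        using refl_closure_incl[of "f ` Y" G] by blast
    next
      case (refl_op a b)
      then have "f (refl_op G a b) = refl_op G (f a) (f b)"
        using f cl by blast
      then show ?case
        using refl_op.IH refl_closure_refl_closed[of G "f ` Y"] by simp
    qed
  qed
  have "refl_closed G (f ` refl_closure G Y)"
    using f cl refl_closure_refl_closed[of G Y] by (rule refl_closed_image)
  moreover have "f ` Y \<subseteq> f ` refl_closure G Y"
    using refl_closure_incl[of Y G] by (rule image_mono)
  ultimately show "refl_closure G (f ` Y) \<subseteq> f ` refl_closure G Y"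
    by (intro refl_closure_minimal)
qed

lemma refl_closure_translate:
  assumes f: "\<And>a b. a \<in> carrier G \<Longrightarrow> b \<in> carrier G \<Longrightarrow> f (refl_op G a b) = refl_op G (f a) (f b)"
    and "A \<subseteq> carrier G" "x \<in> refl_closure G ({\<one>} \<union> A)"
    and "f \<one> = x" "f (inv x) = \<one>"
  shows "refl_closure G ({\<one>, x} \<union> f ` A) = f ` refl_closure G ({\<one>} \<union> A)"
proof -
  let ?L = "refl_closure G ({\<one>} \<union> A)"
  have Y: "{\<one>} \<union> A \<subseteq> carrier G"
    using assms(2) by simp
  then have "inv x \<in> ?L"
    using assms(3) refl_closure_subset_carrier[OF Y]
      refl_closure_refl_closed[of G "{\<one>} \<union> A"] refl_closure_incl[of "{\<one>} \<union> A" G]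
    by (intro inv_mem_refl_closed) auto
  then have "\<one> \<in> f ` ?L"
    using assms(5) by (metis image_eqI)
  moreover have "f ` ?L = refl_closure G (f ` ({\<one>} \<union> A))"
    using f Y by (rule refl_closure_image[where f = f])
  moreover have "f ` ({\<one>} \<union> A) = insert x (f ` A)"
    using assms(4) by simp
  ultimately show ?thesis
    by (simp add: refl_closure_insert)
qed

lemma reflection_system_image:
  assumes f: "\<And>a b. a \<in> carrier G \<Longrightarrow> b \<in> carrier G \<Longrightarrow> f (refl_op G a b) = refl_op G (f a) (f b)"
    and "f ` carrier G \<subseteq> carrier G" "reflection_system G L" "\<one> \<in> f ` L"
    and "L \<subseteq> generate G (f ` L)"
  shows "reflection_system G (f ` L)"
proof -
  have L: "L \<subseteq> carrier G" "generate G L = carrier G" "refl_closed G L"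
    using assms(3) unfolding reflection_system_def by auto
  then have fL: "f ` L \<subseteq> carrier G"
    using assms(2) by blast
  have "generate G L \<subseteq> generate G (f ` L)"
    using assms(5) generate_is_subgroup[OF fL] by (rule generate_subgroup_incl)
  then have "generate G (f ` L) = carrier G"
    using L(2) generate_incl[OF fL] by blast
  moreover have "refl_closed G (f ` L)"
    using f L(1,3) by (rule refl_closed_image)
  ultimately show ?thesis
    unfolding reflection_system_def using fL assms(4) by blast
qed

lemma l_coset_eq_image: "x <#\<^bsub>G\<^esub> S = (\<lambda>y. x \<otimes> y) ` S"
  unfolding l_coset_def by auto

lemma r_coset_eq_image: "S #> x = (\<lambda>y. y \<otimes> x) ` S"
  unfolding r_coset_def by auto

lemma refl_closure_l_coset:
  assumes "A \<subseteq> carrier G" "x \<in> refl_closure G ({\<one>} \<union> A)"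
  shows "refl_closure G ({\<one>, x} \<union> (x <#\<^bsub>G\<^esub> A)) = x <#\<^bsub>G\<^esub> refl_closure G ({\<one>} \<union> A)"
proof -
  have "x \<in> carrier G"
    using assms refl_closure_subset_carrier[of "{\<one>} \<union> A"] by blast
  then show ?thesis
    unfolding l_coset_eq_image using assms
    by (intro refl_closure_translate) (auto simp: mult_refl_op)
qed

lemma refl_closure_r_coset:
  assumes "A \<subseteq> carrier G" "x \<in> refl_closure G ({\<one>} \<union> A)"
  shows "refl_closure G ({\<one>, x} \<union> (A #> x)) = refl_closure G ({\<one>} \<union> A) #> x"
proof -
  have "x \<in> carrier G"
    using assms refl_closure_subset_carrier[of "{\<one>} \<union> A"] by blast
  then show ?thesis
    unfolding r_coset_eq_image using assms
    by (intro refl_closure_translate) (auto simp: refl_op_mult)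
qed

lemma reflection_system_l_coset:
  assumes "reflection_system G L" "x \<in> L"
  shows "reflection_system G (x <#\<^bsub>G\<^esub> L)"
proof -
  have L: "L \<subseteq> carrier G" "refl_closed G L" "\<one> \<in> L"
    using assms(1) unfolding reflection_system_def by auto
  then have x: "x \<in> carrier G" "inv x \<in> L"
    using assms(2) inv_mem_refl_closed by auto
  have "l \<in> generate G (x <#\<^bsub>G\<^esub> L)" if "l \<in> L" for l
  proof -
    have "x \<otimes> \<one> \<in> x <#\<^bsub>G\<^esub> L" "x \<otimes> l \<in> x <#\<^bsub>G\<^esub> L"
      using L(3) that unfolding l_coset_eq_image by auto
    then have "inv (x \<otimes> \<one>) \<otimes> (x \<otimes> l) \<in> generate G (x <#\<^bsub>G\<^esub> L)"
      by (intro generate.eng generate.inv generate.incl)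
    then show ?thesis
      using x(1) L(1) that by (simp add: m_assoc [symmetric] subset_iff)
  qed
  moreover have "x \<otimes> inv x = \<one>"
    using x(1) by simp
  ultimately show ?thesis
    unfolding l_coset_eq_image using assms x L(1)
    by (intro reflection_system_image) (auto simp: mult_refl_op intro: rev_image_eqI)
qed

lemma reflection_system_r_coset:
  assumes "reflection_system G L" "x \<in> L"
  shows "reflection_system G (L #> x)"
proof -
  have L: "L \<subseteq> carrier G" "refl_closed G L" "\<one> \<in> L"
    using assms(1) unfolding reflection_system_def by auto
  then have x: "x \<in> carrier G" "inv x \<in> L"
    using assms(2) inv_mem_refl_closed by auto
  have "l \<in> generate G (L #> x)" if "l \<in> L" for l
  proof -
    have "\<one> \<otimes> x \<in> L #> x" "l \<otimes> x \<in> L #> x"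
      using L(3) that unfolding r_coset_eq_image by auto
    then have "(l \<otimes> x) \<otimes> inv (\<one> \<otimes> x) \<in> generate G (L #> x)"
      by (intro generate.eng generate.inv generate.incl)
    then show ?thesis
      using x(1) L(1) that by (simp add: m_assoc subset_iff)
  qed
  moreover have "inv x \<otimes> x = \<one>"
    using x(1) by simp
  ultimately show ?thesis
    unfolding r_coset_eq_image using assms x L(1)
    by (intro reflection_system_image) (auto simp: refl_op_mult intro: rev_image_eqI)
qed

end

theorem lemma2p3:
  fixes G :: "('a, 'b) monoid_scheme" and A :: "'a set" and x :: 'a
  assumes "group G"
    and "finite (carrier G)"
    and "A \<subseteq> carrier G"
    and "reflection_system G (refl_closure G ({\<one>\<^bsub>G\<^esub>} \<union> A))"
    and "x \<in> refl_closure G ({\<one>\<^bsub>G\<^esub>} \<union> A)"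
  shows "refl_closure G ({\<one>\<^bsub>G\<^esub>, x} \<union> (x <#\<^bsub>G\<^esub> A))
           = x <#\<^bsub>G\<^esub> refl_closure G ({\<one>\<^bsub>G\<^esub>} \<union> A)
       \<and> refl_closure G ({\<one>\<^bsub>G\<^esub>, x} \<union> (A #>\<^bsub>G\<^esub> x))
           = refl_closure G ({\<one>\<^bsub>G\<^esub>} \<union> A) #>\<^bsub>G\<^esub> x
       \<and> reflection_system G (x <#\<^bsub>G\<^esub> refl_closure G ({\<one>\<^bsub>G\<^esub>} \<union> A))
       \<and> reflection_system G (refl_closure G ({\<one>\<^bsub>G\<^esub>} \<union> A) #>\<^bsub>G\<^esub> x)
       \<and> equiv_reflection_systems G (refl_closure G ({\<one>\<^bsub>G\<^esub>} \<union> A))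
           (x <#\<^bsub>G\<^esub> refl_closure G ({\<one>\<^bsub>G\<^esub>} \<union> A))
       \<and> equiv_reflection_systems G (refl_closure G ({\<one>\<^bsub>G\<^esub>} \<union> A))
           (refl_closure G ({\<one>\<^bsub>G\<^esub>} \<union> A) #>\<^bsub>G\<^esub> x)"
proof -
  interpret group G by (rule assms(1))
  show ?thesis
    using refl_closure_l_coset[OF assms(3,5)] refl_closure_r_coset[OF assms(3,5)]
      reflection_system_l_coset[OF assms(4,5)] reflection_system_r_coset[OF assms(4,5)]
      equiv_reflection_systems_l_coset[OF assms(5)] equiv_reflection_systems_r_coset[OF assms(5)]
    by (intro conjI)
qed

end
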